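(* For every $n\ge 1$, no orientation $\overrightarrow{K_{1,n}}$ of the star $K_{1,n}$ is $\{2\}$-antimagic.
   Context: An oriented graph $\overrightarrow{G}$ is a directed graph obtained from a simple undirected graph by giving each edge one direction. For vertices $u,v$, $d(u,v)$ is the length of a shortest directed path from $u$ to $v$ ($d(u,u)=0$, and $d(u,v)=\infty$ if there is no such path). Let $\partial=\max\{d(u,v)<\infty : u,v\in V(\overrightarrow{G})\}$. A distance set is a nonempty $D\subseteq\{0,1,\dots,\partial\}$. The $D$-neighborhood of $u$ is $N_D(u)=\{v : d(u,v)\in D\}$. For a bijection $f:V(\overrightarrow{G})\to\{1,\dots,|V(\overrightarrow{G})|\}$, the $D$-weight of $u$ is $\omega_D(u)=\sum_{v\in N_D(u)} f(v)$ (empty sum $=0$). $\overrightarrow{G}$ is $D$-antimagic if $D\subseteq\{0,\dots,\partial\}$ and there is such a bijection $f$ with all $D$-weights pairwise distinct. *)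

theory Defs
  imports Main
begin

definition is_star :: "'a set \<Rightarrow> 'a set set \<Rightarrow> nat \<Rightarrow> bool" where
  "is_star V E n \<longleftrightarrow> finite V \<and> card V = n + 1 \<and>
     (\<exists>c\<in>V. E = {{c, v} | v. v \<in> V - {c}})"

definition oriented_graph :: "'a set \<Rightarrow> ('a \<times> 'a) set \<Rightarrow> bool" where
  "oriented_graph V A \<longleftrightarrow> finite V \<and> A \<subseteq> V \<times> V \<and>
     (\<forall>u v. (u, v) \<in> A \<longrightarrow> u \<noteq> v \<and> (v, u) \<notin> A)"

definition orientation_of :: "'a set \<Rightarrow> ('a \<times> 'a) set \<Rightarrow> 'a set set \<Rightarrow> bool" where
  "orientation_of V A E \<longleftrightarrow> oriented_graph V A \<and> E = {{u, v} | u v. (u, v) \<in> A}"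

text \<open>d(u,v): length of a shortest directed path (= shortest directed walk) from u to v;
  meaningful only when v is reachable from u, i.e. (u,v) in A^*.\<close>
definition dist :: "('a \<times> 'a) set \<Rightarrow> 'a \<Rightarrow> 'a \<Rightarrow> nat" where
  "dist A u v = (LEAST k. (u, v) \<in> A ^^ k)"

definition max_dist :: "'a set \<Rightarrow> ('a \<times> 'a) set \<Rightarrow> nat" where
  "max_dist V A = Max {dist A u v | u v. u \<in> V \<and> v \<in> V \<and> (u, v) \<in> A\<^sup>*}"

definition D_nbhd :: "'a set \<Rightarrow> ('a \<times> 'a) set \<Rightarrow> nat set \<Rightarrow> 'a \<Rightarrow> 'a set" where
  "D_nbhd V A D u = {v \<in> V. (u, v) \<in> A\<^sup>* \<and> dist A u v \<in> D}"

definition D_weight :: "'a set \<Rightarrow> ('a \<times> 'a) set \<Rightarrow> nat set \<Rightarrow> ('a \<Rightarrow> nat) \<Rightarrow> 'a \<Rightarrow> nat" where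
  "D_weight V A D f u = (\<Sum>v\<in>D_nbhd V A D u. f v)"

definition D_antimagic :: "'a set \<Rightarrow> ('a \<times> 'a) set \<Rightarrow> nat set \<Rightarrow> bool" where
  "D_antimagic V A D \<longleftrightarrow> D \<noteq> {} \<and> D \<subseteq> {0..max_dist V A} \<and>
     (\<exists>f. bij_betw f V {1..card V} \<and> inj_on (D_weight V A D f) V)"

end

theory Submission
  imports Defs
begin

text \<open>In an orientation of a star every arc meets the centre c, so a directed walk of length 2
  has c as its middle vertex. Hence no such walk starts at c, and none starts at some leaf:
  an out-neighbour of c if there is one, otherwise any leaf, as then no arc leaves c. These two
  vertices have empty {2}-neighbourhoods, hence equal {2}-weights 0 under every labelling.\<close>

lemma relpow_dist:
  assumes "(u, v) \<in> A\<^sup>*"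
  shows "(u, v) \<in> A ^^ dist A u v"
proof -
  from assms obtain k where "(u, v) \<in> A ^^ k"
    using rtrancl_power by blast
  then show ?thesis
    unfolding dist_def by (rule LeastI)
qed

lemma D_nbhd_2_eq_empty:
  assumes "u \<notin> Domain (A O A)"
  shows "D_nbhd V A {2} u = {}"
proof (rule ccontr)
  assume "D_nbhd V A {2} u \<noteq> {}"
  then obtain v where "(u, v) \<in> A\<^sup>*" "dist A u v = 2"
    unfolding D_nbhd_def by auto
  then have "(u, v) \<in> A ^^ 2"
    using relpow_dist by fastforce
  then have "(u, v) \<in> A O A"
    by (simp add: numeral_2_eq_2)
  with assms show False
    by blast
qed

lemma D_antimagic_empty_D_nbhd_unique:
  assumes "D_antimagic V A D" "u \<in> V" "v \<in> V"
    and "D_nbhd V A D u = {}" "D_nbhd V A D v = {}"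
  shows "u = v"
proof -
  from assms(1) obtain f where "inj_on (D_weight V A D f) V"
    unfolding D_antimagic_def by blast
  moreover have "D_weight V A D f u = D_weight V A D f v"
    using assms(4,5) unfolding D_weight_def by simp
  ultimately show ?thesis
    using assms(2,3) by (rule inj_onD)
qed

lemma orientation_of_star_obtains_centre:
  assumes "is_star V E n" "orientation_of V A E"
  obtains c where "c \<in> V" "card (V - {c}) = n" "\<And>u v. (u, v) \<in> A \<Longrightarrow> u = c \<or> v = c"
proof -
  from assms(1) obtain c where c: "c \<in> V" "E = {{c, v} | v. v \<in> V - {c}}"
    and "finite V" "card V = n + 1"
    unfolding is_star_def by blast
  then have "card (V - {c}) = n"
    by simp
  moreover have "u = c \<or> v = c" if "(u, v) \<in> A" for u v
  proof -
    have "{u, v} \<in> E"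
      using assms(2) that unfolding orientation_of_def by blast
    then obtain w where "{u, v} = {c, w}"
      using c(2) by blast
    then show ?thesis
      by (metis doubleton_eq_iff)
  qed
  ultimately show thesis
    using c(1) that by blast
qed

lemma centre_notin_Domain_relcomp:
  assumes "oriented_graph V A" "\<And>u v. (u, v) \<in> A \<Longrightarrow> u = c \<or> v = c"
  shows "c \<notin> Domain (A O A)"
  using assms unfolding oriented_graph_def by blast

lemma leaf_notin_Domain_relcomp:
  assumes "oriented_graph V A" "\<And>u v. (u, v) \<in> A \<Longrightarrow> u = c \<or> v = c"
    and "V - {c} \<noteq> {}"
  obtains l where "l \<in> V" "l \<noteq> c" "l \<notin> Domain (A O A)"
proof (cases "c \<in> Domain A")
  case True
  then obtain l where "(c, l) \<in> A"
    by blast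
  then show thesis
    using that assms(1,2) unfolding oriented_graph_def by blast
next
  case False
  then show thesis
    using that assms(2,3) by blast
qed

theorem mainTheorem3:
  fixes V :: "'a set" and E :: "'a set set" and A :: "('a \<times> 'a) set" and n :: nat
  assumes "n \<ge> 1"
    and "is_star V E n"
    and "orientation_of V A E"
  shows "\<not> D_antimagic V A {2}"
proof
  assume antimagic: "D_antimagic V A {2}"
  obtain c where c: "c \<in> V" "card (V - {c}) = n"
    and arcs: "\<And>u v. (u, v) \<in> A \<Longrightarrow> u = c \<or> v = c"
    using orientation_of_star_obtains_centre[OF assms(2,3)] by blast
  have oriented: "oriented_graph V A"
    using assms(3) unfolding orientation_of_def by blast
  have leaves: "V - {c} \<noteq> {}"
    using c(2) assms(1) by (metis card.empty not_one_le_zero)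
  obtain l where "l \<in> V" "l \<noteq> c" "l \<notin> Domain (A O A)"
    using oriented arcs leaves by (rule leaf_notin_Domain_relcomp)
  moreover have "c \<notin> Domain (A O A)"
    using oriented arcs by (rule centre_notin_Domain_relcomp)
  ultimately show False
    using D_antimagic_empty_D_nbhd_unique[OF antimagic] D_nbhd_2_eq_empty c(1) by metis
qed

end
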